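(* Let $R_1,\dots,R_m$ be rectangles with integer dimensions and let $C_1,\dots,C_t$ be horizontal containers. Suppose the rectangles can be packed into the containers when horizontal slicing is allowed, i.e. when each $R_i$ of width $w(R_i)$ and height $h(R_i)$ is replaced by $h(R_i)$ slices of width $w(R_i)$ and height $1$, and the slices are packed into the containers. Then all but at most $t$ of the rectangles $R_1,\dots,R_m$ can be packed (unsliced) into the same containers. The symmetric statement holds for vertical containers with vertical slicing into width-$1$ slices.
   Context: A horizontal container $C$ of width $w(C)$ and height $h(C)$ is an axis-aligned rectangular region in which rectangles are packed one on top of the other from bottom to top (every horizontal line meets at most one packed rectangle); a set of (pieces of) rectangles can be packed in it iff each has width at most $w(C)$ and their heights sum to at most $h(C)$. A vertical container is the analogous region in which rectangles are packed side by side from left to right (every vertical line meets at most one packed rectangle): a set fits iff each has height at most the container height and their widths sum to at most the container width. No rotations are allowed. *)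

theory Defs
  imports Complex_Main
begin

text \<open>Horizontal containers: items stacked bottom to top; a set fits iff each item has
  width at most the container width and the heights sum to at most the container height.\<close>
definition horiz_packable ::
  "'i set \<Rightarrow> ('i \<Rightarrow> nat) \<Rightarrow> ('i \<Rightarrow> nat) \<Rightarrow> nat \<Rightarrow> (nat \<Rightarrow> real) \<Rightarrow> (nat \<Rightarrow> real) \<Rightarrow> bool"
where
  "horiz_packable I wd ht t cw ch \<longleftrightarrow>
     (\<exists>a :: 'i \<Rightarrow> nat.
        (\<forall>i\<in>I. a i < t \<and> real (wd i) \<le> cw (a i)) \<and>
        (\<forall>c<t. real (\<Sum>i\<in>{i\<in>I. a i = c}. ht i) \<le> ch c))"

text \<open>Vertical containers: items placed side by side; a set fits iff each item has
  height at most the container height and the widths sum to at most the container width.\<close>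
definition vert_packable ::
  "'i set \<Rightarrow> ('i \<Rightarrow> nat) \<Rightarrow> ('i \<Rightarrow> nat) \<Rightarrow> nat \<Rightarrow> (nat \<Rightarrow> real) \<Rightarrow> (nat \<Rightarrow> real) \<Rightarrow> bool"
where
  "vert_packable I wd ht t cw ch \<longleftrightarrow>
     (\<exists>a :: 'i \<Rightarrow> nat.
        (\<forall>i\<in>I. a i < t \<and> real (ht i) \<le> ch (a i)) \<and>
        (\<forall>c<t. real (\<Sum>i\<in>{i\<in>I. a i = c}. wd i) \<le> cw c))"

text \<open>Horizontal slices of rectangles 0..m-1: rectangle i gives h i slices (i,j), j < h i,
  each of width w i and height 1.\<close>
definition hslices :: "nat \<Rightarrow> (nat \<Rightarrow> nat) \<Rightarrow> (nat \<times> nat) set" where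
  "hslices m h = {(i, j). i < m \<and> j < h i}"

end

theory Submission
  imports Defs
begin

text \<open>Induction on the containers, widest first. Every rectangle has a slice somewhere, so all
  rectangles fit the width of the widest container x. Put the widest rectangles into x until
  the next one, d, would overflow it, and discard d. The slices that the remaining, narrower
  rectangles had in x can be exchanged one by one with slices that the rectangles now in x
  had in the other containers, because there are more of the latter. This gives a sliced
  packing of the remaining rectangles into the other containers, and one container costs
  one discarded rectangle.\<close>

text \<open>A packing of unit-height slices: n i c slices of item i go into container c.\<close>
definition slice_packing ::
  "'i set \<Rightarrow> 'c set \<Rightarrow> ('i \<Rightarrow> nat) \<Rightarrow> ('i \<Rightarrow> nat) \<Rightarrow> ('c \<Rightarrow> real) \<Rightarrow> ('c \<Rightarrow> real)
    \<Rightarrow> ('i \<Rightarrow> 'c \<Rightarrow> nat) \<Rightarrow> bool"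
where
  "slice_packing R C w h cw ch n \<longleftrightarrow>
     (\<forall>i\<in>R. (\<Sum>c\<in>C. n i c) = h i) \<and>
     (\<forall>i\<in>R. \<forall>c\<in>C. 0 < n i c \<longrightarrow> real (w i) \<le> cw c) \<and>
     (\<forall>c\<in>C. real (\<Sum>i\<in>R. n i c) \<le> ch c)"

definition packing ::
  "'i set \<Rightarrow> 'c set \<Rightarrow> ('i \<Rightarrow> nat) \<Rightarrow> ('i \<Rightarrow> nat) \<Rightarrow> ('c \<Rightarrow> real) \<Rightarrow> ('c \<Rightarrow> real)
    \<Rightarrow> ('i \<Rightarrow> 'c) \<Rightarrow> bool"
where
  "packing S C w h cw ch a \<longleftrightarrow>
     (\<forall>i\<in>S. a i \<in> C \<and> real (w i) \<le> cw (a i)) \<and>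
     (\<forall>c\<in>C. real (\<Sum>i\<in>{i\<in>S. a i = c}. h i) \<le> ch c)"

lemma horiz_packable_iff_packing:
  "horiz_packable S w h t cw ch \<longleftrightarrow> (\<exists>a. packing S {..<t} w h cw ch a)"
  by (auto simp: horiz_packable_def packing_def)

lemma vert_packable_iff_horiz_packable:
  "vert_packable I wd ht t cw ch \<longleftrightarrow> horiz_packable I ht wd t ch cw"
  by (simp add: vert_packable_def horiz_packable_def)

lemma sum_cong_except_two:
  fixes f g :: "'a \<Rightarrow> 'b::comm_monoid_add"
  assumes "finite K" "p \<in> K" "q \<in> K" "p \<noteq> q" "g p + g q = f p + f q"
    and "\<And>y. y \<in> K \<Longrightarrow> y \<noteq> p \<Longrightarrow> y \<noteq> q \<Longrightarrow> g y = f y"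
  shows "sum g K = sum f K"
proof -
  have "sum g (K - {p} - {q}) = sum f (K - {p} - {q})"
    using assms by (intro sum.cong) auto
  then show ?thesis
    using assms by (simp add: sum.remove[of K p] sum.remove[of "K - {p}" q] add.assoc[symmetric])
qed

lemma slice_packing_restrict:
  assumes n: "slice_packing R K w h cw ch n" and "finite R" "finite K" and "R' \<subseteq> R" "C \<subseteq> K"
    and outside: "\<forall>i\<in>R'. \<forall>c\<in>K - C. n i c = 0"
  shows "slice_packing R' C w h cw ch n"
  unfolding slice_packing_def
proof (intro conjI ballI impI)
  fix i assume i: "i \<in> R'"
  have "(\<Sum>c\<in>C. n i c) = (\<Sum>c\<in>K. n i c)"
    using \<open>finite K\<close> \<open>C \<subseteq> K\<close> outside i by (intro sum.mono_neutral_left) simp_all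
  also have "\<dots> = h i"
    using n i \<open>R' \<subseteq> R\<close> by (auto simp: slice_packing_def)
  finally show "(\<Sum>c\<in>C. n i c) = h i" .
next
  fix i c assume "i \<in> R'" "c \<in> C" "0 < n i c"
  moreover have "i \<in> R" "c \<in> K"
    using calculation \<open>R' \<subseteq> R\<close> \<open>C \<subseteq> K\<close> by auto
  ultimately show "real (w i) \<le> cw c"
    using n by (simp add: slice_packing_def)
next
  fix c assume c: "c \<in> C"
  have "(\<Sum>i\<in>R'. n i c) \<le> (\<Sum>i\<in>R. n i c)"
    using \<open>finite R\<close> \<open>R' \<subseteq> R\<close> by (rule sum_mono2) simp
  moreover have "real (\<Sum>i\<in>R. n i c) \<le> ch c"
    using n c \<open>C \<subseteq> K\<close> by (auto simp: slice_packing_def)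
  ultimately show "real (\<Sum>i\<in>R'. n i c) \<le> ch c"
    by (meson of_nat_le_iff order_trans)
qed

lemma slice_packing_width_le_widest:
  assumes n: "slice_packing R K w h cw ch n" and i: "i \<in> R" "0 < h i"
    and widest: "\<forall>c\<in>K. cw c \<le> cw x"
  shows "real (w i) \<le> cw x"
proof -
  have "0 < (\<Sum>c\<in>K. n i c)"
    using n i by (simp add: slice_packing_def)
  then obtain c where "c \<in> K" "0 < n i c"
    by (metis gr0_implies_Suc sum_SucD)
  then show ?thesis
    using n i widest by (force simp: slice_packing_def)
qed

lemma slice_packing_swap:
  assumes n: "slice_packing R K w h cw ch n" and "finite R" "finite K"
    and i: "i \<in> R" and j: "j \<in> R" and "i \<noteq> j" and c: "c \<in> K" and x: "x \<in> K" and "c \<noteq> x"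
    and "0 < n i c" "0 < n j x" and narrower: "w j \<le> w i" and fits: "real (w i) \<le> cw x"
  shows "\<exists>n'. slice_packing R K w h cw ch n' \<and> n' j x = n j x - 1 \<and> n' i x = n i x + 1
           \<and> (\<forall>k. k \<noteq> i \<longrightarrow> k \<noteq> j \<longrightarrow> n' k x = n k x)"
proof -
  define n' where "n' k d =
    (if k = i \<and> d = c then n k d - 1 else if k = i \<and> d = x then n k d + 1
     else if k = j \<and> d = x then n k d - 1 else if k = j \<and> d = c then n k d + 1 else n k d)"
    for k d
  note distinct = \<open>i \<noteq> j\<close> \<open>c \<noteq> x\<close> \<open>c \<noteq> x\<close>[symmetric] \<open>i \<noteq> j\<close>[symmetric]
  have "slice_packing R K w h cw ch n'"
    unfolding slice_packing_def
  proof (intro conjI ballI impI)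
    fix k assume k: "k \<in> R"
    have "(\<Sum>d\<in>K. n' k d) = (\<Sum>d\<in>K. n k d)"
    proof (rule sum_cong_except_two[where p = x and q = c])
      show "n' k x + n' k c = n k x + n k c"
        using distinct \<open>0 < n i c\<close> \<open>0 < n j x\<close> by (simp add: n'_def)
    qed (use \<open>finite K\<close> x c distinct in \<open>simp_all add: n'_def\<close>)
    then show "(\<Sum>d\<in>K. n' k d) = h k"
      using n k by (simp add: slice_packing_def)
  next
    fix k d assume k: "k \<in> R" and d: "d \<in> K" and pos: "0 < n' k d"
    have "real (w i) \<le> cw c"
      using n i c \<open>0 < n i c\<close> by (simp add: slice_packing_def)
    then have "real (w j) \<le> cw c"
      using narrower by linarith
    moreover have "0 < n k d" if "\<not> (k = j \<and> d = c)" "\<not> (k = i \<and> d = x)"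
      using pos that distinct by (simp add: n'_def split: if_splits)
    ultimately show "real (w k) \<le> cw d"
      using n k d fits by (auto simp: slice_packing_def)
  next
    fix d assume d: "d \<in> K"
    have "(\<Sum>k\<in>R. n' k d) = (\<Sum>k\<in>R. n k d)"
    proof (rule sum_cong_except_two[where p = i and q = j])
      show "n' i d + n' j d = n i d + n j d"
        using distinct \<open>0 < n i c\<close> \<open>0 < n j x\<close> by (simp add: n'_def)
    qed (use \<open>finite R\<close> i j distinct in \<open>simp_all add: n'_def\<close>)
    then show "real (\<Sum>k\<in>R. n' k d) \<le> ch d"
      using n d by (simp add: slice_packing_def)
  qed
  moreover have "n' j x = n j x - 1" "n' i x = n i x + 1"
      "\<forall>k. k \<noteq> i \<longrightarrow> k \<noteq> j \<longrightarrow> n' k x = n k x"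
    using distinct by (simp_all add: n'_def)
  ultimately show ?thesis
    by blast
qed

text \<open>While a rectangle outside D has a slice in x, the bound cap yields a slice of a rectangle
  of D outside x, and the two can be swapped.\<close>
lemma slice_packing_drop_widest_container:
  assumes "finite R" "finite C" "x \<notin> C" and widest: "\<forall>c\<in>C. cw c \<le> cw x"
    and "D \<subseteq> R" and wider: "\<forall>i\<in>D. \<forall>j\<in>R - D. w j \<le> w i"
    and cap: "(\<Sum>i\<in>R. n i x) \<le> (\<Sum>i\<in>D. h i)"
    and n: "slice_packing R (insert x C) w h cw ch n"
  shows "\<exists>n'. slice_packing (R - D) C w h cw ch n'"
  using cap n
proof (induction "\<Sum>j\<in>R - D. n j x" arbitrary: n)
  case 0
  then have "\<forall>j\<in>R - D. n j x = 0"
    using \<open>finite R\<close> by simp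
  then have "\<forall>j\<in>R - D. \<forall>c\<in>insert x C - C. n j c = 0"
    by auto
  then have "slice_packing (R - D) C w h cw ch n"
    using \<open>finite R\<close> \<open>finite C\<close>
    by (intro slice_packing_restrict[OF "0.prems"(2)]) auto
  then show ?case by blast
next
  case (Suc A n)
  obtain j where j: "j \<in> R - D" "0 < n j x"
    using sum_SucD[OF Suc.hyps(2)[symmetric]] by blast
  have rows: "h i = n i x + (\<Sum>c\<in>C. n i c)" if "i \<in> R" for i
    using Suc.prems(2) that \<open>x \<notin> C\<close> \<open>finite C\<close> by (simp add: slice_packing_def)
  have "(\<Sum>i\<in>R. n i x) = (\<Sum>i\<in>D. n i x) + (\<Sum>i\<in>R - D. n i x)"
    using sum.subset_diff[OF \<open>D \<subseteq> R\<close> \<open>finite R\<close>] by (simp add: add.commute)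
  moreover have "(\<Sum>i\<in>D. h i) = (\<Sum>i\<in>D. n i x) + (\<Sum>i\<in>D. \<Sum>c\<in>C. n i c)"
    using rows \<open>D \<subseteq> R\<close> by (simp add: sum.distrib[symmetric] subset_iff)
  ultimately have "0 < (\<Sum>i\<in>D. \<Sum>c\<in>C. n i c)"
    using Suc.prems(1) Suc.hyps(2) by linarith
  then obtain i where "i \<in> D" "0 < (\<Sum>c\<in>C. n i c)"
    by (metis gr0_implies_Suc sum_SucD)
  then obtain c where ic: "i \<in> D" "c \<in> C" "0 < n i c"
    by (metis gr0_implies_Suc sum_SucD)
  have "real (w i) \<le> cw c"
    using Suc.prems(2) ic \<open>D \<subseteq> R\<close> by (auto simp: slice_packing_def)
  then have "real (w i) \<le> cw x"
    using widest ic by force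
  moreover have "i \<in> R" "i \<noteq> j" "c \<noteq> x" "w j \<le> w i"
    using ic j \<open>D \<subseteq> R\<close> \<open>x \<notin> C\<close> wider by auto
  ultimately obtain n' where n': "slice_packing R (insert x C) w h cw ch n'"
      "n' j x = n j x - 1" "n' i x = n i x + 1" "\<forall>k. k \<noteq> i \<longrightarrow> k \<noteq> j \<longrightarrow> n' k x = n k x"
    using slice_packing_swap[OF Suc.prems(2) \<open>finite R\<close>] \<open>finite C\<close> ic j by blast
  have "(\<Sum>k\<in>R. n' k x) = (\<Sum>k\<in>R. n k x)"
    using n' \<open>i \<in> R\<close> \<open>i \<noteq> j\<close> j \<open>finite R\<close> \<open>D \<subseteq> R\<close> by (intro sum_cong_except_two[where p = i and q = j]) auto
  then have cap': "(\<Sum>k\<in>R. n' k x) \<le> (\<Sum>i\<in>D. h i)"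
    using Suc.prems(1) by simp
  have "(\<Sum>k\<in>R - D. n' k x) = A"
  proof -
    have "(\<Sum>k\<in>R - D - {j}. n' k x) = (\<Sum>k\<in>R - D - {j}. n k x)"
      using n'(4) ic by (intro sum.cong) auto
    then show ?thesis
      using Suc.hyps(2) j n'(2) \<open>finite R\<close> by (simp add: sum.remove)
  qed
  then show ?case
    using Suc.hyps(1) cap' n'(1) by blast
qed

lemma widest_first_overflow:
  fixes h w :: "'i \<Rightarrow> nat"
  assumes "finite R" "0 \<le> X" "X < real (\<Sum>i\<in>R. h i)"
  shows "\<exists>T d. T \<subseteq> R \<and> d \<in> R - T \<and> real (\<Sum>i\<in>T. h i) \<le> X \<and> X < real (\<Sum>i\<in>T. h i) + real (h d)
           \<and> (\<forall>i\<in>insert d T. \<forall>j\<in>R - insert d T. w j \<le> w i)"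
  using assms
proof (induction R arbitrary: X rule: finite_ranking_induct[where f = w])
  case empty
  then show ?case by simp
next
  case (insert x S)
  show ?case
  proof (cases "x \<in> S")
    case True
    then show ?thesis
      using insert by (simp add: insert_absorb)
  next
    case x: False
    show ?thesis
    proof (cases "X < real (h x)")
      case True
      then show ?thesis
        using insert.hyps(2) insert.prems(1) by (intro exI[of _ "{}"] exI[of _ x]) auto
    next
      case False
      then obtain T d where T: "T \<subseteq> S" "d \<in> S - T" "real (\<Sum>i\<in>T. h i) \<le> X - h x"
          "X - h x < real (\<Sum>i\<in>T. h i) + real (h d)"
          "\<forall>i\<in>insert d T. \<forall>j\<in>S - insert d T. w j \<le> w i"
        using insert.IH[of "X - h x"] insert.prems(2) insert.hyps(1) x by auto
      have "(\<Sum>i\<in>insert x T. h i) = h x + (\<Sum>i\<in>T. h i)"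
        using T(1) x insert.hyps(1) finite_subset by (subst sum.insert) auto
      moreover have "\<forall>i\<in>insert d (insert x T). \<forall>j\<in>insert x S - insert d (insert x T). w j \<le> w i"
        using T(5) insert.hyps(2) by auto
      ultimately show ?thesis
        using T(1-4) x by (intro exI[of _ "insert x T"] exI[of _ d]) auto
    qed
  qed
qed

text \<open>T consists of the widest rectangles that fit into x; the next one, which overflows x,
  is the only rectangle lost.\<close>
lemma slice_packing_split_widest:
  assumes "finite R" "finite C" "x \<notin> C" and widest: "\<forall>c\<in>C. cw c \<le> cw x"
    and pos: "\<forall>i\<in>R. 0 < h i" and n: "slice_packing R (insert x C) w h cw ch n"
  shows "\<exists>T R' n'. T \<subseteq> R \<and> R' \<subseteq> R - T \<and> card (R - T - R') \<le> 1
           \<and> (\<forall>i\<in>T. real (w i) \<le> cw x) \<and> real (\<Sum>i\<in>T. h i) \<le> ch x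
           \<and> slice_packing R' C w h cw ch n'"
proof -
  have fits: "\<forall>i\<in>R. real (w i) \<le> cw x"
    using slice_packing_width_le_widest[OF n] pos widest by blast
  have load: "real (\<Sum>i\<in>R. n i x) \<le> ch x"
    using n by (simp add: slice_packing_def)
  show ?thesis
  proof (cases "real (\<Sum>i\<in>R. h i) \<le> ch x")
    case True
    have "slice_packing {} C w h cw ch n"
      using \<open>finite R\<close> \<open>finite C\<close> by (intro slice_packing_restrict[OF n]) auto
    then show ?thesis
      using True fits by (intro exI[of _ R] exI[of _ "{}"] exI[of _ n]) auto
  next
    case False
    have "0 \<le> ch x"
      using load by (meson of_nat_0_le_iff order_trans)
    then obtain T d where T: "T \<subseteq> R" "d \<in> R - T" "real (\<Sum>i\<in>T. h i) \<le> ch x"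
        "ch x < real (\<Sum>i\<in>T. h i) + real (h d)"
        "\<forall>i\<in>insert d T. \<forall>j\<in>R - insert d T. w j \<le> w i"
      using widest_first_overflow[OF \<open>finite R\<close>, of "ch x" h w] False by auto
    have "finite T"
      using T(1) \<open>finite R\<close> by (rule finite_subset)
    then have "(\<Sum>i\<in>insert d T. h i) = (\<Sum>i\<in>T. h i) + h d"
      using T(2) by simp
    then have "(\<Sum>i\<in>R. n i x) \<le> (\<Sum>i\<in>insert d T. h i)"
      using load T(4) by linarith
    then obtain n' where "slice_packing (R - insert d T) C w h cw ch n'"
      using slice_packing_drop_widest_container[OF assms(1-4) _ T(5) _ n] T(1,2) by blast
    moreover have "R - T - (R - insert d T) \<subseteq> {d}"
      by auto
    then have "card (R - T - (R - insert d T)) \<le> 1"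
      using card_mono[of "{d}"] by simp
    ultimately show ?thesis
      using T(1,3) fits by (intro exI[of _ T] exI[of _ "R - insert d T"] exI) blast
  qed
qed

lemma packing_insert_container:
  assumes a: "packing S C w h cw ch a" and "x \<notin> C" "S \<inter> T = {}"
    and "\<forall>i\<in>T. real (w i) \<le> cw x" "real (\<Sum>i\<in>T. h i) \<le> ch x"
  shows "packing (S \<union> T) (insert x C) w h cw ch (\<lambda>i. if i \<in> T then x else a i)"
  unfolding packing_def
proof (intro conjI ballI)
  fix i assume "i \<in> S \<union> T"
  then show "(if i \<in> T then x else a i) \<in> insert x C"
    and "real (w i) \<le> cw (if i \<in> T then x else a i)"
    using a assms(4) by (auto simp: packing_def)
next
  fix c assume c: "c \<in> insert x C"
  show "real (\<Sum>i\<in>{i\<in>S \<union> T. (if i \<in> T then x else a i) = c}. h i) \<le> ch c"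
  proof (cases "c = x")
    case True
    then have "{i\<in>S \<union> T. (if i \<in> T then x else a i) = c} = T"
      using a \<open>x \<notin> C\<close> by (auto simp: packing_def)
    then show ?thesis
      using True assms(5) by simp
  next
    case False
    then have "{i\<in>S \<union> T. (if i \<in> T then x else a i) = c} = {i\<in>S. a i = c}"
      using \<open>S \<inter> T = {}\<close> by auto
    then show ?thesis
      using a c False by (simp add: packing_def)
  qed
qed

lemma slice_packing_imp_packing_all_but_card:
  assumes "finite C" "finite R" "\<forall>i\<in>R. 0 < h i" "slice_packing R C w h cw ch n"
  shows "\<exists>S\<subseteq>R. card (R - S) \<le> card C \<and> (\<exists>a. packing S C w h cw ch a)"
  using assms
proof (induction C arbitrary: R n rule: finite_ranking_induct[where f = cw])
  case empty
  then have "R = {}"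
    by (auto simp: slice_packing_def)
  then show ?case
    by (auto simp: packing_def)
next
  case (insert x C)
  show ?case
  proof (cases "x \<in> C")
    case True
    then show ?thesis
      using insert by (simp add: insert_absorb)
  next
    case False
    obtain T R' n' where split: "T \<subseteq> R" "R' \<subseteq> R - T" "card (R - T - R') \<le> 1"
        "\<forall>i\<in>T. real (w i) \<le> cw x" "real (\<Sum>i\<in>T. h i) \<le> ch x" "slice_packing R' C w h cw ch n'"
      using slice_packing_split_widest[OF insert.prems(1) insert.hyps(1) False _ insert.prems(2,3)]
        insert.hyps(2) by blast
    moreover have "finite R'"
      using split(2) insert.prems(1) finite_subset by blast
    ultimately obtain S a where S: "S \<subseteq> R'" "card (R' - S) \<le> card C" "packing S C w h cw ch a"
      using insert.IH[of R' n'] insert.prems(2) by blast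
    have "R - (S \<union> T) \<subseteq> (R - T - R') \<union> (R' - S)"
      using split(2) by blast
    then have "card (R - (S \<union> T)) \<le> card ((R - T - R') \<union> (R' - S))"
      using insert.prems(1) \<open>finite R'\<close> by (intro card_mono) auto
    also have "\<dots> \<le> card (R - T - R') + card (R' - S)"
      by (rule card_Un_le)
    also have "\<dots> \<le> card (insert x C)"
      using split(3) S(2) False insert.hyps(1) by simp
    finally have "card (R - (S \<union> T)) \<le> card (insert x C)" .
    moreover have "S \<inter> T = {}"
      using S(1) split(2) by blast
    then have "packing (S \<union> T) (insert x C) w h cw ch (\<lambda>i. if i \<in> T then x else a i)"
      by (rule packing_insert_container[OF S(3) False _ split(4,5)])
    moreover have "S \<union> T \<subseteq> R"
      using S(1) split(1,2) by blast
    ultimately show ?thesis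
      by blast
  qed
qed

lemma horiz_packable_hslices_imp_slice_packing:
  assumes "horiz_packable (hslices m h) (\<lambda>(i, j). w i) (\<lambda>_. 1) t cw ch"
  shows "\<exists>n. slice_packing {..<m} {..<t} w h cw ch n"
proof -
  obtain a where fit: "\<forall>s\<in>hslices m h. a s < t \<and> real ((\<lambda>(i, j). w i) s) \<le> cw (a s)"
    and load: "\<forall>c<t. real (card {s\<in>hslices m h. a s = c}) \<le> ch c"
    using assms unfolding horiz_packable_def by auto
  have sigma: "hslices m h = (SIGMA i:{..<m}. {..<h i})"
    by (auto simp: hslices_def)
  define n where "n i c = card {j\<in>{..<h i}. a (i, j) = c}" for i c
  have "slice_packing {..<m} {..<t} w h cw ch n"
    unfolding slice_packing_def
  proof (intro conjI ballI impI)
    fix i assume i: "i \<in> {..<m}"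
    have "(\<lambda>j. a (i, j)) ` {..<h i} \<subseteq> {..<t}"
      using fit i sigma by auto
    then show "(\<Sum>c\<in>{..<t}. n i c) = h i"
      unfolding n_def using sum.group[of "{..<h i}" "{..<t}" "\<lambda>j. a (i, j)" "\<lambda>_. 1::nat"] by simp
  next
    fix i c assume "i \<in> {..<m}" "c \<in> {..<t}" "0 < n i c"
    then obtain j where "j < h i" "a (i, j) = c"
      unfolding n_def by (auto simp: card_gt_0_iff)
    then show "real (w i) \<le> cw c"
      using fit \<open>i \<in> {..<m}\<close> sigma by fastforce
  next
    fix c assume "c \<in> {..<t}"
    have "{s\<in>hslices m h. a s = c} = (SIGMA i:{..<m}. {j\<in>{..<h i}. a (i, j) = c})"
      using sigma by auto
    then have "(\<Sum>i\<in>{..<m}. n i c) = card {s\<in>hslices m h. a s = c}"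
      by (simp add: n_def)
    then show "real (\<Sum>i\<in>{..<m}. n i c) \<le> ch c"
      using load \<open>c \<in> {..<t}\<close> by (simp del: of_nat_sum)
  qed
  then show ?thesis by blast
qed

lemma horiz_packable_hslices_all_but_t:
  assumes "\<forall>i<m. 0 < h i" and "horiz_packable (hslices m h) (\<lambda>(i, j). w i) (\<lambda>_. 1) t cw ch"
  shows "\<exists>S \<subseteq> {..<m}. card ({..<m} - S) \<le> t \<and> horiz_packable S w h t cw ch"
proof -
  obtain n where "slice_packing {..<m} {..<t} w h cw ch n"
    using horiz_packable_hslices_imp_slice_packing[OF assms(2)] by blast
  then show ?thesis
    using slice_packing_imp_packing_all_but_card[of "{..<t}" "{..<m}" h] assms(1)
    by (simp add: horiz_packable_iff_packing)
qed

theorem lemma11: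
  fixes m t :: nat and w h :: "nat \<Rightarrow> nat" and cw ch :: "nat \<Rightarrow> real"
  assumes pos: "\<forall>i<m. 0 < w i \<and> 0 < h i"
  shows "(horiz_packable (hslices m h) (\<lambda>(i, j). w i) (\<lambda>_. 1) t cw ch \<longrightarrow>
            (\<exists>S \<subseteq> {..<m}. card ({..<m} - S) \<le> t \<and> horiz_packable S w h t cw ch))
       \<and> (vert_packable (hslices m w) (\<lambda>_. 1) (\<lambda>(i, j). h i) t cw ch \<longrightarrow>
            (\<exists>S \<subseteq> {..<m}. card ({..<m} - S) \<le> t \<and> vert_packable S w h t cw ch))"
proof (intro conjI impI)
  have "\<forall>i<m. 0 < h i" "\<forall>i<m. 0 < w i"
    using pos by simp_all
  note all_but_t = this[THEN horiz_packable_hslices_all_but_t]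
  show "\<exists>S \<subseteq> {..<m}. card ({..<m} - S) \<le> t \<and> horiz_packable S w h t cw ch"
    if "horiz_packable (hslices m h) (\<lambda>(i, j). w i) (\<lambda>_. 1) t cw ch"
    using all_but_t(1)[OF that] .
  show "\<exists>S \<subseteq> {..<m}. card ({..<m} - S) \<le> t \<and> vert_packable S w h t cw ch"
    if "vert_packable (hslices m w) (\<lambda>_. 1) (\<lambda>(i, j). h i) t cw ch"
    using all_but_t(2) that by (simp add: vert_packable_iff_horiz_packable)
qed

end
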